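(* Let $\ell,\tilde\ell\in\mathcal{D}^-[0,\infty)$ and $r,\tilde r\in\mathcal{D}^+[0,\infty)$ with $\tilde\ell\le\ell$, $r\le\tilde r$ and $\inf_{t\ge0}(r(t)-\ell(t))>0$. Given $\psi\in\mathcal{D}[0,\infty)$, let $(\eta_\ell,\eta_r)$ and $(\eta_{\tilde\ell},\eta_{\tilde r})$ be the constraining processes associated with the SP for $\psi$ on $[\ell(\cdot),r(\cdot)]$ and on $[\tilde\ell(\cdot),\tilde r(\cdot)]$, respectively. Then for every $t\ge0$, $\eta_r(t)\ge\eta_{\tilde r}(t)$ and $\eta_\ell(t)\ge\eta_{\tilde\ell}(t)$.
   Context: $\mathcal{D}[0,\infty)$ denotes the càdlàg functions $[0,\infty)\to(-\infty,\infty)$; $\mathcal{D}^-[0,\infty)$ (resp. $\mathcal{D}^+[0,\infty)$) denotes càdlàg functions with values in $[-\infty,\infty)$ (resp. $(-\infty,\infty]$). SP: $(\phi,\eta)\in\mathcal{D}[0,\infty)^2$ solves the SP on $[\ell(\cdot),r(\cdot)]$ for $\psi$ if (1) $\phi(t)=\psi(t)+\eta(t)\in[\ell(t),r(t)]$ for all $t\ge0$; (2) $\eta=\eta_\ell-\eta_r$ with $\eta_\ell,\eta_r$ non-decreasing and $\int_0^\infty \mathbb{I}_{\{\phi(s)>\ell(s)\}}\,d\eta_\ell(s)=0$, $\int_0^\infty \mathbb{I}_{\{\phi(s)<r(s)\}}\,d\eta_r(s)=0$. The pair $(\eta_\ell,\eta_r)$ is called the pair of constraining processes associated with the SP. When $\inf_t(r(t)-\ell(t))>0$,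 the SP has a unique solution for every $\psi\in\mathcal{D}[0,\infty)$. *)

theory Defs
  imports "HOL-Analysis.Analysis"
begin

definition cadlag :: "(real \<Rightarrow> 'a::topological_space) \<Rightarrow> bool" where
  "cadlag f \<longleftrightarrow> (\<forall>t\<ge>0. continuous (at_right t) f \<and>
                        (t > 0 \<longrightarrow> (\<exists>L. (f \<longlongrightarrow> L) (at_left t))))"

definition Dspace :: "(real \<Rightarrow> real) set" where
  "Dspace = {f. cadlag f}"

definition Dminus :: "(real \<Rightarrow> ereal) set" where
  "Dminus = {f. cadlag f \<and> (\<forall>t\<ge>0. f t \<noteq> \<infinity>)}"

definition Dplus :: "(real \<Rightarrow> ereal) set" where
  "Dplus = {f. cadlag f \<and> (\<forall>t\<ge>0. f t \<noteq> -\<infinity>)}"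

text \<open>Lebesgue-Stieltjes measure d g on [0,oo) of a non-decreasing cadlag g,
  with the convention g(0-) = 0 (so the jump g(0) at time 0 is an atom).\<close>
definition LS_measure :: "(real \<Rightarrow> real) \<Rightarrow> real measure" where
  "LS_measure g = interval_measure (\<lambda>x. if x < 0 then 0 else g x)"

definition nondecr_from0 :: "(real \<Rightarrow> real) \<Rightarrow> bool" where
  "nondecr_from0 g \<longleftrightarrow> 0 \<le> g 0 \<and> (\<forall>s t. 0 \<le> s \<longrightarrow> s \<le> t \<longrightarrow> g s \<le> g t)"

definition solves_SP ::
  "(real \<Rightarrow> ereal) \<Rightarrow> (real \<Rightarrow> ereal) \<Rightarrow> (real \<Rightarrow> real) \<Rightarrow> (real \<Rightarrow> real) \<Rightarrow> (real \<Rightarrow> real) \<Rightarrow> bool"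
  where
  "solves_SP l r psi phi eta \<longleftrightarrow> phi \<in> Dspace \<and> eta \<in> Dspace \<and>
     (\<forall>t\<ge>0. phi t = psi t + eta t \<and> l t \<le> ereal (phi t) \<and> ereal (phi t) \<le> r t)"

text \<open>(eta_l, eta_r) is the pair of constraining processes associated with the SP
  on [l(.), r(.)] for psi: there is a solution (phi, eta) of the SP with
  eta = eta_l - eta_r, eta_l, eta_r non-decreasing cadlag (with eta_l(0-) = eta_r(0-) = 0),
  d eta_l carried by {phi = l} and d eta_r carried by {phi = r} on [0,oo).\<close>
definition constraining_pair ::
  "(real \<Rightarrow> ereal) \<Rightarrow> (real \<Rightarrow> ereal) \<Rightarrow> (real \<Rightarrow> real) \<Rightarrow> (real \<Rightarrow> real) \<Rightarrow> (real \<Rightarrow> real) \<Rightarrow> bool"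
  where
  "constraining_pair l r psi eta_l eta_r \<longleftrightarrow>
     (\<exists>phi eta. solves_SP l r psi phi eta \<and>
        eta_l \<in> Dspace \<and> eta_r \<in> Dspace \<and>
        nondecr_from0 eta_l \<and> nondecr_from0 eta_r \<and>
        (\<forall>t\<ge>0. eta t = eta_l t - eta_r t) \<and>
        (AE s in LS_measure eta_l. 0 \<le> s \<longrightarrow> \<not> (ereal (phi s) > l s)) \<and>
        (AE s in LS_measure eta_r. 0 \<le> s \<longrightarrow> \<not> (ereal (phi s) < r s)))"

end

theory Submission
  imports Defs
begin

text \<open>Let \<open>\<sigma>\<close> be the first time at which one of the two differences
  \<open>\<eta>\<^sub>r~ - \<eta>\<^sub>r\<close>, \<open>\<eta>\<^sub>l~ - \<eta>\<^sub>l\<close> becomes positive. Since \<open>r - l \<ge> \<delta>\<close>, the solution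
  \<open>\<phi>~\<close> of the SP on the wider interval cannot sit on both of its boundaries at \<open>\<sigma>\<close>,
  say it is strictly above \<open>l~\<close>; by right-continuity this persists on some \<open>[\<sigma>, b)\<close>,
  where \<open>\<eta>\<^sub>l~\<close> then cannot increase. A non-decreasing function can only overtake
  another one at a point charged by its own Stieltjes measure, so on \<open>[\<sigma>, b)\<close> the
  difference \<open>\<eta>\<^sub>l~ - \<eta>\<^sub>l\<close> stays \<open>\<le> 0\<close>, and \<open>\<eta>\<^sub>r~ - \<eta>\<^sub>r\<close> could only become positive
  at a time when \<open>\<phi>~ = r~ \<ge> r \<ge> \<phi>\<close>. But \<open>\<phi>~ - \<phi> = (\<eta>\<^sub>l~ - \<eta>\<^sub>l) - (\<eta>\<^sub>r~ - \<eta>\<^sub>r)\<close>,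
  so then \<open>\<eta>\<^sub>l~ - \<eta>\<^sub>l > 0\<close> as well, a contradiction with the choice of \<open>\<sigma>\<close>.\<close>

lemma AE_bex_of_emeasure_pos:
  assumes "AE x in M. P x" "A \<in> sets M" "emeasure M A > 0"
  shows "\<exists>x\<in>A. P x"
proof (rule ccontr)
  assume "\<not> ?thesis"
  with assms(1) have "AE x in M. x \<notin> A" by (auto elim: AE_mp)
  then have "emeasure M A = 0"
    using assms(2) by (simp add: AE_iff_measurable[OF _ refl] sets.sets_into_space Int_absorb1 flip: Int_def)
  with assms(3) show False by simp
qed

lemma emeasure_interval_measure_singleton_ge:
  fixes G :: "real \<Rightarrow> real"
  assumes "mono G" "\<And>x. continuous (at_right x) G"
    and jump: "\<And>v. v < w \<Longrightarrow> c \<le> G w - G v"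
  shows "ennreal c \<le> emeasure (interval_measure G) {w}"
proof -
  define A where "A n = {w - 1 / real (Suc n) <.. w}" for n
  have emA: "emeasure (interval_measure G) (A n) = G w - G (w - 1 / real (Suc n))" for n
    unfolding A_def using assms(1,2) by (intro emeasure_interval_measure_Ioc) (auto simp: mono_def)
  have "decseq A"
  proof (rule decseq_SucI)
    fix n
    have "1 / real (Suc (Suc n)) \<le> 1 / real (Suc n)" by (simp add: frac_le)
    then show "A (Suc n) \<subseteq> A n" by (auto simp: A_def)
  qed
  moreover have "(\<Inter>n. A n) = {w}"
  proof (intro equalityI subsetI)
    fix x assume x: "x \<in> (\<Inter>n. A n)"
    have "\<not> x < w"
    proof
      assume "x < w"
      then obtain n where "inverse (real (Suc n)) < w - x"
        using reals_Archimedean[of "w - x"] by auto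
      moreover have "w - 1 / real (Suc n) < x" using x by (auto simp: A_def)
      ultimately show False by (simp add: inverse_eq_divide)
    qed
    with x show "x \<in> {w}" by (auto simp: A_def)
  qed (auto simp: A_def)
  ultimately have "(INF n. emeasure (interval_measure G) (A n)) = emeasure (interval_measure G) {w}"
    using emA by (subst INF_emeasure_decseq) (auto simp: A_def)
  moreover have "ennreal c \<le> (INF n. emeasure (interval_measure G) (A n))"
    using jump by (auto simp: emA intro!: INF_greatest ennreal_leI)
  ultimately show ?thesis by simp
qed

text \<open>The point is found at \<open>w\<^sub>0 = sup {w \<in> [a, u]. G w \<le> H w}\<close>, either as an atom
  of \<open>dG\<close> at \<open>w\<^sub>0\<close> or in the interval \<open>(w\<^sub>0, u]\<close>, which has positive \<open>dG\<close>-measure.\<close>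

lemma interval_measure_overtake_point:
  fixes G H :: "real \<Rightarrow> real"
  assumes mono: "mono G" "mono H" and rc: "\<And>x. continuous (at_right x) G"
    and AE: "AE x in interval_measure G. P x"
    and "a < u" "G a \<le> H a" "H u < G u"
  shows "\<exists>x. a < x \<and> x \<le> u \<and> P x \<and> H x < G x"
proof -
  define T where "T = {w. a \<le> w \<and> w \<le> u \<and> G w \<le> H w}"
  define w0 where "w0 = Sup T"
  have aT: "a \<in> T" using assms by (auto simp: T_def)
  have bdd: "bdd_above T" unfolding T_def by (rule bdd_aboveI[of _ u]) auto
  have le_w0: "w \<le> w0" if "w \<in> T" for w
    unfolding w0_def using that bdd by (rule cSup_upper)
  have "w0 \<le> u" unfolding w0_def using aT by (intro cSup_least) (auto simp: T_def)
  show ?thesis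
  proof (cases "G w0 \<le> H w0")
    case True
    with \<open>w0 \<le> u\<close> \<open>H u < G u\<close> have "w0 < u" by (cases "w0 = u") auto
    then have "H w0 \<le> H u" using mono(2) by (auto simp: mono_def)
    with True \<open>H u < G u\<close> have "0 < G u - G w0" by simp
    then have "emeasure (interval_measure G) {w0<..u} > 0"
      using \<open>w0 < u\<close> mono(1) rc by (subst emeasure_interval_measure_Ioc) (auto simp: mono_def)
    then obtain x where x: "w0 < x" "x \<le> u" "P x"
      using AE_bex_of_emeasure_pos[OF AE, of "{w0<..u}"] by auto
    then have "x \<notin> T" using le_w0 by force
    with x le_w0[OF aT] have "a < x" "H x < G x" by (auto simp: T_def)
    with x show ?thesis by blast
  next
    case False
    have "G w0 - H w0 \<le> G w0 - G v" if "v < w0" for v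
    proof -
      from that obtain w where w: "w \<in> T" "v < w"
        using less_cSup_iff[OF _ bdd] aT by (auto simp: w0_def)
      then have "G v \<le> G w" "H w \<le> H w0" using le_w0 mono by (auto simp: mono_def)
      with w(1) show ?thesis by (auto simp: T_def)
    qed
    then have "ennreal (G w0 - H w0) \<le> emeasure (interval_measure G) {w0}"
      by (rule emeasure_interval_measure_singleton_ge[OF mono(1) rc])
    with False have "emeasure (interval_measure G) {w0} > 0"
      by (metis diff_gt_0_iff_gt ennreal_eq_0_iff not_le order.strict_trans1 not_gr_zero)
    then have "P w0" using AE_bex_of_emeasure_pos[OF AE, of "{w0}"] by auto
    moreover have "w0 \<noteq> a" using False \<open>G a \<le> H a\<close> by auto
    ultimately show ?thesis using le_w0[OF aT] \<open>w0 \<le> u\<close> False by (intro exI[of _ w0]) auto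
  qed
qed

lemma never_by_real_induction:
  fixes Q :: "real \<Rightarrow> bool"
  assumes nonneg: "\<And>x. Q x \<Longrightarrow> 0 \<le> x"
    and step: "\<And>\<sigma>. 0 \<le> \<sigma> \<Longrightarrow> (\<And>x. x < \<sigma> \<Longrightarrow> \<not> Q x) \<Longrightarrow> \<exists>b>\<sigma>. \<forall>u. \<sigma> \<le> u \<longrightarrow> u < b \<longrightarrow> \<not> Q u"
  shows "\<not> Q t"
proof
  assume "Q t"
  then have ne: "{x. Q x} \<noteq> {}" and bdd: "bdd_below {x. Q x}"
    using nonneg by (auto intro: bdd_belowI[of _ 0])
  define \<sigma> where "\<sigma> = Inf {x. Q x}"
  have "0 \<le> \<sigma>" unfolding \<sigma>_def using ne nonneg by (intro cInf_greatest) auto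
  moreover have "\<not> Q x" if "x < \<sigma>" for x
    using cInf_lower[OF _ bdd, of x] that by (force simp: \<sigma>_def)
  ultimately obtain b where "\<sigma> < b" and clear: "\<And>u. \<sigma> \<le> u \<Longrightarrow> u < b \<Longrightarrow> \<not> Q u"
    using step by blast
  then obtain s where "Q s" "s < b" using cInf_less_iff[OF ne bdd] by (auto simp: \<sigma>_def)
  with clear cInf_lower[OF _ bdd, of s] show False by (auto simp: \<sigma>_def)
qed

lemma right_continuous_less_on_interval:
  fixes f g :: "real \<Rightarrow> ereal"
  assumes "continuous (at_right s) f" "continuous (at_right s) g" "f s < g s"
  obtains b where "s < b" "\<And>x. s \<le> x \<Longrightarrow> x < b \<Longrightarrow> f x < g x"
proof -
  obtain m where m: "f s < ereal m" "ereal m < g s" using ereal_dense2[OF assms(3)] by auto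
  have "eventually (\<lambda>x. f x < ereal m) (at_right s)"
    using assms(1) m(1) unfolding continuous_within by (rule order_tendstoD(2))
  moreover have "eventually (\<lambda>x. ereal m < g x) (at_right s)"
    using assms(2) m(2) unfolding continuous_within by (rule order_tendstoD(1))
  ultimately have "eventually (\<lambda>x. f x < g x) (at_right s)"
    by eventually_elim auto
  then obtain b where "s < b" "\<And>x. s < x \<Longrightarrow> x < b \<Longrightarrow> f x < g x"
    unfolding eventually_at_right_field by auto
  with assms(3) show ?thesis by (metis order_le_less that)
qed

text \<open>As \<open>f < g\<close> on some \<open>[\<sigma>, b)\<close>, \<open>dGa\<close> does not charge it, so \<open>Ga\<close> cannot overtake
  \<open>Ha\<close> there; nor can \<open>Gb\<close> overtake \<open>Hb\<close>, since by \<open>compare\<close> this would happen at a point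
  where \<open>Ga\<close> is already ahead of \<open>Ha\<close>.\<close>

lemma no_overtake_after_first_time:
  fixes Ga Ha Gb Hb :: "real \<Rightarrow> real" and f g :: "real \<Rightarrow> ereal"
  assumes mono: "mono Ga" "mono Ha" "mono Gb" "mono Hb"
    and rc: "\<And>x. continuous (at_right x) Ga" "\<And>x. continuous (at_right x) Gb"
    and AE: "AE x in interval_measure Ga. 0 \<le> x \<longrightarrow> g x \<le> f x" "AE x in interval_measure Gb. Pb x"
    and below: "\<And>x. x < \<sigma> \<Longrightarrow> Ga x \<le> Ha x \<and> Gb x \<le> Hb x"
    and "0 \<le> \<sigma>" "continuous (at_right \<sigma>) f" "continuous (at_right \<sigma>) g" "f \<sigma> < g \<sigma>"
    and compare: "\<And>x. \<sigma> \<le> x \<Longrightarrow> Pb x \<Longrightarrow> Gb x - Hb x \<le> Ga x - Ha x"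
  obtains b where "\<sigma> < b" "\<And>u. \<sigma> \<le> u \<Longrightarrow> u < b \<Longrightarrow> Ga u \<le> Ha u \<and> Gb u \<le> Hb u"
proof -
  obtain b where "\<sigma> < b" and off: "\<And>x. \<sigma> \<le> x \<Longrightarrow> x < b \<Longrightarrow> f x < g x"
    using right_continuous_less_on_interval[of \<sigma> f g] assms(10-13) by blast
  have a_le: "Ga v \<le> Ha v" if v: "\<sigma> \<le> v" "v < b" for v
  proof (rule ccontr)
    assume "\<not> Ga v \<le> Ha v"
    then obtain x where "\<sigma> - 1 < x" "x \<le> v" "0 \<le> x \<longrightarrow> g x \<le> f x" "Ha x < Ga x"
      using interval_measure_overtake_point[OF mono(1,2) rc(1) AE(1), of "\<sigma> - 1" v] below[of "\<sigma> - 1"] v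
      by auto
    with below[of x] off[of x] v \<open>0 \<le> \<sigma>\<close> show False by force
  qed
  have b_le: "Gb u \<le> Hb u" if u: "\<sigma> \<le> u" "u < b" for u
  proof (rule ccontr)
    assume "\<not> Gb u \<le> Hb u"
    then obtain x where "\<sigma> - 1 < x" "x \<le> u" "Pb x" "Hb x < Gb x"
      using interval_measure_overtake_point[OF mono(3,4) rc(2) AE(2), of "\<sigma> - 1" u] below[of "\<sigma> - 1"] u
      by auto
    with below[of x] compare[of x] a_le[of x] u show False by force
  qed
  show thesis using that \<open>\<sigma> < b\<close> a_le b_le by blast
qed

lemma not_on_both_boundaries:
  fixes lt l r rt :: ereal and x \<delta> :: real
  assumes "lt \<le> l" "l + ereal \<delta> \<le> r" "r \<le> rt" "0 < \<delta>"
  shows "lt < ereal x \<or> ereal x < rt"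
proof (rule ccontr)
  assume "\<not> ?thesis"
  with assms have "ereal x \<le> l" "l + ereal \<delta> \<le> ereal x"
    by (meson not_less order_trans)+
  with \<open>0 < \<delta>\<close> show False by (cases l) auto
qed

lemma no_overtake_of_processes:
  fixes Elt El Ert Er :: "real \<Rightarrow> real" and lt rt :: "real \<Rightarrow> ereal" and phit :: "real \<Rightarrow> real"
  assumes mono: "mono Elt" "mono El" "mono Ert" "mono Er"
    and rc: "\<And>x. continuous (at_right x) Elt" "\<And>x. continuous (at_right x) Ert"
    and AE: "AE x in interval_measure Elt. 0 \<le> x \<longrightarrow> ereal (phit x) \<le> lt x"
      "AE x in interval_measure Ert. 0 \<le> x \<longrightarrow> rt x \<le> ereal (phit x)"
    and rc_bounds: "\<And>t. 0 \<le> t \<Longrightarrow> continuous (at_right t) lt" "\<And>t. 0 \<le> t \<Longrightarrow> continuous (at_right t) rt"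
      "\<And>t. 0 \<le> t \<Longrightarrow> continuous (at_right t) (\<lambda>x. ereal (phit x))"
    and interior: "\<And>t. 0 \<le> t \<Longrightarrow> lt t < ereal (phit t) \<or> ereal (phit t) < rt t"
    and at_rt: "\<And>x. 0 \<le> x \<Longrightarrow> rt x \<le> ereal (phit x) \<Longrightarrow> Ert x - Er x \<le> Elt x - El x"
    and at_lt: "\<And>x. 0 \<le> x \<Longrightarrow> ereal (phit x) \<le> lt x \<Longrightarrow> Elt x - El x \<le> Ert x - Er x"
    and negative: "\<And>x. x < 0 \<Longrightarrow> Elt x \<le> El x \<and> Ert x \<le> Er x"
  shows "Elt t \<le> El t \<and> Ert t \<le> Er t"
proof -
  define Q where "Q x \<longleftrightarrow> \<not> (Elt x \<le> El x \<and> Ert x \<le> Er x)" for x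
  have "\<not> Q t"
  proof (rule never_by_real_induction)
    show "0 \<le> x" if "Q x" for x
      using that negative[of x] by (force simp: Q_def)
    fix \<sigma> :: real
    assume "0 \<le> \<sigma>" and before: "\<And>x. x < \<sigma> \<Longrightarrow> \<not> Q x"
    have below: "Elt x \<le> El x \<and> Ert x \<le> Er x" and below': "Ert x \<le> Er x \<and> Elt x \<le> El x"
      if "x < \<sigma>" for x
      using before[OF that] by (auto simp: Q_def)
    have compare_r: "Ert x - Er x \<le> Elt x - El x"
      if "\<sigma> \<le> x" "0 \<le> x \<longrightarrow> rt x \<le> ereal (phit x)" for x
      using at_rt[of x] that \<open>0 \<le> \<sigma>\<close> by simp
    have compare_l: "Elt x - El x \<le> Ert x - Er x"
      if "\<sigma> \<le> x" "0 \<le> x \<longrightarrow> ereal (phit x) \<le> lt x" for x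
      using at_lt[of x] that \<open>0 \<le> \<sigma>\<close> by simp
    obtain b where "\<sigma> < b" and "\<And>u. \<sigma> \<le> u \<Longrightarrow> u < b \<Longrightarrow> \<not> Q u"
      using interior[OF \<open>0 \<le> \<sigma>\<close>]
    proof
      assume "lt \<sigma> < ereal (phit \<sigma>)"
      show thesis
        by (rule no_overtake_after_first_time[OF mono rc AE below \<open>0 \<le> \<sigma>\<close>
              rc_bounds(1,3)[OF \<open>0 \<le> \<sigma>\<close>] \<open>lt \<sigma> < ereal (phit \<sigma>)\<close> compare_r])
          (use that in \<open>auto simp: Q_def\<close>)
    next
      assume "ereal (phit \<sigma>) < rt \<sigma>"
      show thesis
        by (rule no_overtake_after_first_time[OF mono(3,4,1,2) rc(2,1) AE(2,1) below' \<open>0 \<le> \<sigma>\<close>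
              rc_bounds(3,2)[OF \<open>0 \<le> \<sigma>\<close>] \<open>ereal (phit \<sigma>) < rt \<sigma>\<close> compare_l])
          (use that in \<open>auto simp: Q_def\<close>)
    qed
    then show "\<exists>b>\<sigma>. \<forall>u. \<sigma> \<le> u \<longrightarrow> u < b \<longrightarrow> \<not> Q u" by blast
  qed
  then show ?thesis by (simp add: Q_def)
qed

definition zero_ext :: "(real \<Rightarrow> real) \<Rightarrow> real \<Rightarrow> real" where
  "zero_ext g x = (if x < 0 then 0 else g x)"

lemma LS_measure_zero_ext: "LS_measure g = interval_measure (zero_ext g)"
  by (simp add: LS_measure_def zero_ext_def[abs_def])

lemma mono_zero_ext: "nondecr_from0 g \<Longrightarrow> mono (zero_ext g)"
  unfolding nondecr_from0_def mono_def zero_ext_def by (smt (verit))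

lemma continuous_at_right_zero_ext:
  assumes "g \<in> Dspace"
  shows "continuous (at_right a) (zero_ext g)"
proof -
  have "eventually (\<lambda>y. zero_ext g y = (if a < 0 then 0 else g y)) (at_right a)"
    using eventually_at_right_less[of a] eventually_at_right_real[of a 0]
    by (cases "a < 0") (auto elim: eventually_mono simp: zero_ext_def)
  moreover have "continuous (at_right a) (\<lambda>y. if a < 0 then 0 else g y)"
    using assms by (cases "a < 0") (auto simp: Dspace_def cadlag_def)
  ultimately show ?thesis
    unfolding continuous_within by (simp add: tendsto_cong zero_ext_def)
qed

lemma constraining_pairE:
  assumes "constraining_pair l r psi eta_l eta_r"
  obtains phi where
    "\<And>t. 0 \<le> t \<Longrightarrow> phi t = psi t + zero_ext eta_l t - zero_ext eta_r t"
    "\<And>t. 0 \<le> t \<Longrightarrow> l t \<le> ereal (phi t) \<and> ereal (phi t) \<le> r t"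
    "\<And>t. 0 \<le> t \<Longrightarrow> continuous (at_right t) (\<lambda>x. ereal (phi x))"
    "mono (zero_ext eta_l)" "mono (zero_ext eta_r)"
    "\<And>x. continuous (at_right x) (zero_ext eta_l)" "\<And>x. continuous (at_right x) (zero_ext eta_r)"
    "AE x in interval_measure (zero_ext eta_l). 0 \<le> x \<longrightarrow> ereal (phi x) \<le> l x"
    "AE x in interval_measure (zero_ext eta_r). 0 \<le> x \<longrightarrow> r x \<le> ereal (phi x)"
proof -
  obtain phi eta where SP: "solves_SP l r psi phi eta" and D: "eta_l \<in> Dspace" "eta_r \<in> Dspace"
    and nd: "nondecr_from0 eta_l" "nondecr_from0 eta_r" and eta: "\<forall>t\<ge>0. eta t = eta_l t - eta_r t"
    and AE: "AE s in LS_measure eta_l. 0 \<le> s \<longrightarrow> \<not> (ereal (phi s) > l s)"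
      "AE s in LS_measure eta_r. 0 \<le> s \<longrightarrow> \<not> (ereal (phi s) < r s)"
    using assms unfolding constraining_pair_def by blast
  show ?thesis
  proof
    show "phi t = psi t + zero_ext eta_l t - zero_ext eta_r t" "l t \<le> ereal (phi t) \<and> ereal (phi t) \<le> r t"
      if "0 \<le> t" for t
      using SP eta that by (auto simp: solves_SP_def zero_ext_def)
    show "continuous (at_right t) (\<lambda>x. ereal (phi x))" if "0 \<le> t" for t
      using SP that unfolding solves_SP_def Dspace_def cadlag_def continuous_within
      by (auto intro: tendsto_ereal)
    show "AE x in interval_measure (zero_ext eta_l). 0 \<le> x \<longrightarrow> ereal (phi x) \<le> l x"
      "AE x in interval_measure (zero_ext eta_r). 0 \<le> x \<longrightarrow> r x \<le> ereal (phi x)"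
      using AE unfolding LS_measure_zero_ext not_less by simp_all
  qed (use D nd mono_zero_ext continuous_at_right_zero_ext in auto)
qed

theorem proposition3p3:
  fixes l lt r rt :: "real \<Rightarrow> ereal" and psi eta_l eta_r eta_lt eta_rt :: "real \<Rightarrow> real"
  assumes "l \<in> Dminus" and "lt \<in> Dminus" and "r \<in> Dplus" and "rt \<in> Dplus"
    and "\<forall>t\<ge>0. lt t \<le> l t" and "\<forall>t\<ge>0. r t \<le> rt t"
    and "\<exists>\<delta>>0. \<forall>t\<ge>0. l t + ereal \<delta> \<le> r t"
    and "psi \<in> Dspace"
    and "constraining_pair l r psi eta_l eta_r"
    and "constraining_pair lt rt psi eta_lt eta_rt"
  shows "\<forall>t\<ge>0. eta_r t \<ge> eta_rt t \<and> eta_l t \<ge> eta_lt t"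
proof -
  obtain \<delta> where "\<delta> > 0" and gap: "\<forall>t\<ge>0. l t + ereal \<delta> \<le> r t" using assms(7) by blast
  obtain phi where phi: "\<And>t. 0 \<le> t \<Longrightarrow> phi t = psi t + zero_ext eta_l t - zero_ext eta_r t"
      "\<And>t. 0 \<le> t \<Longrightarrow> l t \<le> ereal (phi t) \<and> ereal (phi t) \<le> r t"
    and mono: "mono (zero_ext eta_l)" "mono (zero_ext eta_r)"
    by (rule constraining_pairE[OF assms(9)]) blast
  obtain phit where phit: "\<And>t. 0 \<le> t \<Longrightarrow> phit t = psi t + zero_ext eta_lt t - zero_ext eta_rt t"
      "\<And>t. 0 \<le> t \<Longrightarrow> lt t \<le> ereal (phit t) \<and> ereal (phit t) \<le> rt t"
      "\<And>t. 0 \<le> t \<Longrightarrow> continuous (at_right t) (\<lambda>x. ereal (phit x))"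
    and mono_t: "mono (zero_ext eta_lt)" "mono (zero_ext eta_rt)"
    and rc_t: "\<And>x. continuous (at_right x) (zero_ext eta_lt)" "\<And>x. continuous (at_right x) (zero_ext eta_rt)"
    and AE_t: "AE x in interval_measure (zero_ext eta_lt). 0 \<le> x \<longrightarrow> ereal (phit x) \<le> lt x"
      "AE x in interval_measure (zero_ext eta_rt). 0 \<le> x \<longrightarrow> rt x \<le> ereal (phit x)"
    by (rule constraining_pairE[OF assms(10)]) blast
  have ordered: "zero_ext eta_lt t \<le> zero_ext eta_l t \<and> zero_ext eta_rt t \<le> zero_ext eta_r t" for t
  proof (rule no_overtake_of_processes[OF mono_t(1) mono(1) mono_t(2) mono(2) rc_t AE_t])
    show "continuous (at_right t) lt" "continuous (at_right t) rt" if "0 \<le> t" for t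
      using assms(2,4) that by (simp_all add: Dminus_def Dplus_def cadlag_def)
    show "lt t < ereal (phit t) \<or> ereal (phit t) < rt t" if "0 \<le> t" for t
      using not_on_both_boundaries[of "lt t" "l t" \<delta> "r t" "rt t"] assms(5,6) gap that \<open>\<delta> > 0\<close> by auto
    show "zero_ext eta_rt x - zero_ext eta_r x \<le> zero_ext eta_lt x - zero_ext eta_l x"
      if "0 \<le> x" "rt x \<le> ereal (phit x)" for x
    proof -
      have "ereal (phi x) \<le> ereal (phit x)"
        using phi(2)[OF that(1)] assms(6) that by (meson order_trans)
      then show ?thesis using phi(1) phit(1) that(1) by simp
    qed
    show "zero_ext eta_lt x - zero_ext eta_l x \<le> zero_ext eta_rt x - zero_ext eta_r x"
      if "0 \<le> x" "ereal (phit x) \<le> lt x" for x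
    proof -
      have "ereal (phit x) \<le> ereal (phi x)"
        using phi(2)[OF that(1)] assms(5) that by (meson order_trans)
      then show ?thesis using phi(1) phit(1) that(1) by simp
    qed
  qed (use phit(3) in \<open>auto simp: zero_ext_def\<close>)
  show ?thesis
  proof (intro allI impI)
    fix t :: real
    assume "0 \<le> t"
    with ordered[of t] show "eta_rt t \<le> eta_r t \<and> eta_lt t \<le> eta_l t" by (simp add: zero_ext_def)
  qed
qed

end
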